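(* Let $G$ be a loopless multigraph, $k\ge1$, $M$ a maximal $k$-edge-colorable subgraph of $G$, $\psi$ a proper $k$-edge-coloring of $M$, and $y\in V(G)$ with $d_M(y)<k$. Then for all distinct $w,z \in N_M(y) \cup \{y\}$, we have $C(w) \cap C(z) = \emptyset$.
   Context: $\mu_G(v,w)$ (resp. $\mu_M(v,w)$) is the number of edges of $G$ (resp. $M$) joining $v,w$; $d_M(v)$ is the number of $M$-edges at $v$; $N_M(y)$ is the set of neighbors of $y$ in $M$. $F_k(y)=\{w\in N_G(y): d_M(w)\le k-\mu_G(y,w)\}$ and $U_k(y)=\{w\in F_k(y): \mu_M(y,w)<\mu_G(y,w)\}$. For distinct vertices $w,z$, $\psi(w,z)$ is the set of colors used by $\psi$ on edges of $M$ joining $w$ and $z$; $\psi(w)$ is the set of colors on $M$-edges incident to $w$; $O(w)=\{1,\dots,k\}\setminus\psi(w)$. For each $u\in U_k(y)$, $H_u$ is the multidigraph on vertex set $N_M(y)\cup\{u\}$ in which the number of arcs from $w$ to $z$ is $|O(w)\cap\psi(y,z)|$. A vertex $z\in N_M(y)$ is remote if for every $u\in U_k(y)$, $z$ is not reachable from $u$ by a directed path in $H_u$. For $w\in U_k(y)\cup N_M(y)\cup\{y\}$: $C(w)=\psi(y,w)$ if $w$ is remote, and $C(w)=O(w)$ otherwise (so $C(y)=O(y)$). *)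

theory Defs
  imports Main
begin

text \<open>A loopless multigraph: vertex set V, edge set E (edges are distinct objects, so
parallel edges are allowed), and an endpoint map ends assigning each edge a 2-element
set of vertices.  A subgraph M is given by a subset of the edges (spanning).\<close>

definition loopless_multigraph :: "'v set \<Rightarrow> 'e set \<Rightarrow> ('e \<Rightarrow> 'v set) \<Rightarrow> bool" where
  "loopless_multigraph V E ends \<longleftrightarrow> finite V \<and> finite E \<and>
     (\<forall>e\<in>E. ends e \<subseteq> V \<and> card (ends e) = 2)"

definition mult :: "'e set \<Rightarrow> ('e \<Rightarrow> 'v set) \<Rightarrow> 'v \<Rightarrow> 'v \<Rightarrow> nat" where
  "mult A ends v w = card {e\<in>A. ends e = {v, w}}"

definition deg :: "'e set \<Rightarrow> ('e \<Rightarrow> 'v set) \<Rightarrow> 'v \<Rightarrow> nat" where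
  "deg A ends v = card {e\<in>A. v \<in> ends e}"

definition nbrs :: "'e set \<Rightarrow> ('e \<Rightarrow> 'v set) \<Rightarrow> 'v \<Rightarrow> 'v set" where
  "nbrs A ends y = {w. \<exists>e\<in>A. ends e = {y, w}}"

definition proper_coloring :: "'e set \<Rightarrow> ('e \<Rightarrow> 'v set) \<Rightarrow> nat \<Rightarrow> ('e \<Rightarrow> nat) \<Rightarrow> bool" where
  "proper_coloring A ends k \<psi> \<longleftrightarrow>
     (\<forall>e\<in>A. \<psi> e \<in> {1..k}) \<and>
     (\<forall>e\<in>A. \<forall>f\<in>A. e \<noteq> f \<and> ends e \<inter> ends f \<noteq> {} \<longrightarrow> \<psi> e \<noteq> \<psi> f)"

definition k_colorable :: "'e set \<Rightarrow> ('e \<Rightarrow> 'v set) \<Rightarrow> nat \<Rightarrow> bool" where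
  "k_colorable A ends k \<longleftrightarrow> (\<exists>\<psi>. proper_coloring A ends k \<psi>)"

definition maximal_k_colorable_sub :: "'e set \<Rightarrow> ('e \<Rightarrow> 'v set) \<Rightarrow> nat \<Rightarrow> 'e set \<Rightarrow> bool" where
  "maximal_k_colorable_sub E ends k M \<longleftrightarrow>
     M \<subseteq> E \<and> k_colorable M ends k \<and>
     (\<forall>M'. M \<subset> M' \<and> M' \<subseteq> E \<longrightarrow> \<not> k_colorable M' ends k)"

definition Fk :: "'e set \<Rightarrow> 'e set \<Rightarrow> ('e \<Rightarrow> 'v set) \<Rightarrow> nat \<Rightarrow> 'v \<Rightarrow> 'v set" where
  "Fk E M ends k y = {w \<in> nbrs E ends y.
      int (deg M ends w) \<le> int k - int (mult E ends y w)}"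

definition Uk :: "'e set \<Rightarrow> 'e set \<Rightarrow> ('e \<Rightarrow> 'v set) \<Rightarrow> nat \<Rightarrow> 'v \<Rightarrow> 'v set" where
  "Uk E M ends k y = {w \<in> Fk E M ends k y. mult M ends y w < mult E ends y w}"

definition colors_between :: "'e set \<Rightarrow> ('e \<Rightarrow> 'v set) \<Rightarrow> ('e \<Rightarrow> nat) \<Rightarrow> 'v \<Rightarrow> 'v \<Rightarrow> nat set" where
  "colors_between M ends \<psi> w z = \<psi> ` {e\<in>M. ends e = {w, z}}"

definition colors_at :: "'e set \<Rightarrow> ('e \<Rightarrow> 'v set) \<Rightarrow> ('e \<Rightarrow> nat) \<Rightarrow> 'v \<Rightarrow> nat set" where
  "colors_at M ends \<psi> w = \<psi> ` {e\<in>M. w \<in> ends e}"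

definition missing :: "'e set \<Rightarrow> ('e \<Rightarrow> 'v set) \<Rightarrow> ('e \<Rightarrow> nat) \<Rightarrow> nat \<Rightarrow> 'v \<Rightarrow> nat set" where
  "missing M ends \<psi> k w = {1..k} - colors_at M ends \<psi> w"

definition H_verts :: "'e set \<Rightarrow> ('e \<Rightarrow> 'v set) \<Rightarrow> 'v \<Rightarrow> 'v \<Rightarrow> 'v set" where
  "H_verts M ends y u = nbrs M ends y \<union> {u}"

definition H_arcs :: "'e set \<Rightarrow> ('e \<Rightarrow> 'v set) \<Rightarrow> ('e \<Rightarrow> nat) \<Rightarrow> nat \<Rightarrow> 'v \<Rightarrow> 'v \<Rightarrow> 'v \<Rightarrow> nat" where
  "H_arcs M ends \<psi> k y w z = card (missing M ends \<psi> k w \<inter> colors_between M ends \<psi> y z)"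

definition H_reach :: "'e set \<Rightarrow> ('e \<Rightarrow> 'v set) \<Rightarrow> ('e \<Rightarrow> nat) \<Rightarrow> nat \<Rightarrow> 'v \<Rightarrow> 'v \<Rightarrow> 'v \<Rightarrow> bool" where
  "H_reach M ends \<psi> k y u z \<longleftrightarrow>
     (\<lambda>a b. a \<in> H_verts M ends y u \<and> b \<in> H_verts M ends y u \<and>
            H_arcs M ends \<psi> k y a b > 0)\<^sup>*\<^sup>* u z"

definition remote :: "'e set \<Rightarrow> 'e set \<Rightarrow> ('e \<Rightarrow> 'v set) \<Rightarrow> ('e \<Rightarrow> nat) \<Rightarrow> nat \<Rightarrow> 'v \<Rightarrow> 'v \<Rightarrow> bool" where
  "remote E M ends \<psi> k y z \<longleftrightarrow> z \<in> nbrs M ends y \<and>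
     (\<forall>u \<in> Uk E M ends k y. \<not> H_reach M ends \<psi> k y u z)"

definition Cset :: "'e set \<Rightarrow> 'e set \<Rightarrow> ('e \<Rightarrow> 'v set) \<Rightarrow> ('e \<Rightarrow> nat) \<Rightarrow> nat \<Rightarrow> 'v \<Rightarrow> 'v \<Rightarrow> nat set" where
  "Cset E M ends \<psi> k y w =
     (if remote E M ends \<psi> k y w then colors_between M ends \<psi> y w else missing M ends \<psi> k w)"

end

theory Submission
  imports Defs
begin

text \<open>Fix an uncoloured edge \<open>yu\<close> with \<open>u \<in> U\<^sub>k(y)\<close>. Maximality of \<open>M\<close> gives
  \<open>O(y) \<inter> O(u) = {}\<close>, and this propagates along \<open>H\<^sub>u\<close>: if \<open>v\<close> is reached from \<open>u\<close>
  through an arc coloured \<open>d\<close> and some \<open>c\<close> were missing at \<open>y\<close> and \<open>v\<close>, recolouring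
  the edge \<open>yv\<close> from \<open>d\<close> to \<open>c\<close> would make \<open>d\<close> missing at \<open>y\<close> and at the predecessor of
  \<open>v\<close> on a shorter path. This separates \<open>C(y)\<close> from every non-remote \<open>C(z)\<close>; a colour of
  \<open>\<psi>(y,w)\<close> missing at a non-remote \<open>z\<close> would be an arc making \<open>w\<close> non-remote.
  For two non-remote neighbours sharing a missing colour \<open>\<alpha>\<close>, pick \<open>\<beta> \<in> O(y)\<close> and the
  first vertices missing \<open>\<alpha>\<close> on the two paths. The \<open>\<alpha>\<beta>\<close>-chain through \<open>y\<close> is a path, so
  it cannot end in both; swapping \<open>\<alpha>\<close> and \<open>\<beta>\<close> on the chain of the other one keeps it
  reachable and makes \<open>\<beta>\<close> missing there and at \<open>y\<close>, against the propagation lemma.\<close>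

lemma rtranclp_imp_inj_walk:
  assumes "P\<^sup>*\<^sup>* s t"
  obtains n f where "f 0 = s" "f n = t" "\<forall>i<n. P (f i) (f (Suc i))" "inj_on f {..n}"
proof -
  obtain n where n: "(P ^^ n) s t" and shortest: "\<And>m. m < n \<Longrightarrow> \<not> (P ^^ m) s t"
    using assms exists_least_iff[of "\<lambda>n. (P ^^ n) s t"] by (metis rtranclp_imp_relpowp)
  obtain f where f: "f 0 = s" "f n = t" "\<forall>i<n. P (f i) (f (Suc i))"
    using n relpowp_fun_conv by metis
  have "inj_on f {..n}"
  proof (rule ccontr)
    assume "\<not> inj_on f {..n}"
    then obtain i j where ij: "i < j" "j \<le> n" "f i = f j"
      unfolding inj_on_def by (metis atMost_iff linorder_neqE_nat)
    define g where "g l = (if l \<le> i then f l else f (l + (j - i)))" for l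
    have "g 0 = s" using f unfolding g_def by auto
    moreover have "g (n - (j - i)) = t"
    proof (cases "n - (j - i) \<le> i")
      case True
      then have "n - (j - i) = i" "j = n" using ij by auto
      then show ?thesis using f ij unfolding g_def by auto
    qed (use f ij in \<open>auto simp: g_def\<close>)
    moreover have "P (g l) (g (Suc l))" if "l < n - (j - i)" for l
    proof (cases "l < i")
      case True
      then show ?thesis using f ij unfolding g_def by auto
    next
      case False
      then have "g l = f (l + (j - i))" "g (Suc l) = f (Suc (l + (j - i)))"
        using ij unfolding g_def by (auto simp: le_Suc_eq)
      then show ?thesis using f that by auto
    qed
    ultimately have "(P ^^ (n - (j - i))) s t"
      using relpowp_fun_conv by metis
    then show False using shortest ij by auto
  qed
  with f that show thesis by blast
qed

lemma rtranclp_first_hit: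
  assumes "R\<^sup>*\<^sup>* a w" "Q w"
  obtains x where "(\<lambda>a b. R a b \<and> \<not> Q a)\<^sup>*\<^sup>* a x" "Q x" "R\<^sup>*\<^sup>* x w"
proof -
  from assms(1) have "\<exists>x. (\<lambda>a b. R a b \<and> \<not> Q a)\<^sup>*\<^sup>* a x \<and> Q x \<and> R\<^sup>*\<^sup>* x w"
  proof (induction rule: converse_rtranclp_induct)
    case base
    show ?case using assms(2) by (intro exI[of _ w]) simp
  next
    case (step a b)
    then obtain x where x: "(\<lambda>a b. R a b \<and> \<not> Q a)\<^sup>*\<^sup>* b x" "Q x" "R\<^sup>*\<^sup>* x w"
      by blast
    show ?case
    proof (cases "Q a")
      case True
      have "R\<^sup>*\<^sup>* a w" using step.hyps by (rule converse_rtranclp_into_rtranclp)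
      with True show ?thesis by (intro exI[of _ a]) simp
    next
      case False
      with step.hyps(1) x(1) have "(\<lambda>a b. R a b \<and> \<not> Q a)\<^sup>*\<^sup>* a x"
        by (simp add: converse_rtranclp_into_rtranclp)
      with x show ?thesis by blast
    qed
  qed
  with that show thesis by blast
qed

lemma proper_coloring_insert_missing:
  assumes "proper_coloring A ends k \<psi>" "ends e = {a, b}"
    and "c \<in> missing A ends \<psi> k a" "c \<in> missing A ends \<psi> k b"
  shows "proper_coloring (insert e A) ends k (\<psi>(e := c))"
  using assms unfolding proper_coloring_def missing_def colors_at_def by (auto; blast)

lemma missing_fun_upd_other:
  "p \<notin> ends e \<Longrightarrow> missing A ends (\<psi>(e := c)) k p = missing A ends \<psi> k p"
  unfolding missing_def colors_at_def by (auto simp: image_def)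

lemma colors_between_fun_upd_other:
  "ends e \<noteq> {a, b} \<Longrightarrow> colors_between A ends (\<psi>(e := c)) a b = colors_between A ends \<psi> a b"
  unfolding colors_between_def by (auto simp: image_def)

lemma recolor_edge:
  assumes proper: "proper_coloring M ends k \<psi>" and e: "e \<in> M" "ends e = {a, b}"
    and c: "c \<in> missing M ends \<psi> k a" "c \<in> missing M ends \<psi> k b"
  shows "proper_coloring M ends k (\<psi>(e := c))" and "\<psi> e \<in> missing M ends (\<psi>(e := c)) k a"
proof -
  show "proper_coloring M ends k (\<psi>(e := c))"
    using proper_coloring_insert_missing[OF proper e(2) c] e(1) by (simp add: insert_absorb)
  have "\<psi> e \<notin> colors_at M ends (\<psi>(e := c)) a"
  proof
    assume "\<psi> e \<in> colors_at M ends (\<psi>(e := c)) a"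
    then obtain f where f: "\<psi> e = (\<psi>(e := c)) f" "f \<in> {f \<in> M. a \<in> ends f}"
      unfolding colors_at_def by (rule imageE)
    show False
    proof (cases "f = e")
      case True
      with f(1) have "c = \<psi> e" by simp
      moreover have "\<psi> e \<in> colors_at M ends \<psi> a" using e unfolding colors_at_def by auto
      ultimately show False using c(1) unfolding missing_def by simp
    next
      case False
      with f(1) have "\<psi> f = \<psi> e" by simp
      moreover have "a \<in> ends e" using e(2) by simp
      ultimately show False using proper False f(2) e(1) unfolding proper_coloring_def by blast
    qed
  qed
  moreover have "\<psi> e \<in> {1..k}" using proper e(1) unfolding proper_coloring_def by blast
  ultimately show "\<psi> e \<in> missing M ends (\<psi>(e := c)) k a" unfolding missing_def by blast
qed

lemma missing_nonempty_if_deg_less: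
  assumes "finite M" "deg M ends v < k"
  shows "missing M ends \<psi> k v \<noteq> {}"
proof
  assume "missing M ends \<psi> k v = {}"
  then have "{1..k} \<subseteq> \<psi> ` {e\<in>M. v \<in> ends e}" unfolding missing_def colors_at_def by auto
  moreover have "finite (\<psi> ` {e\<in>M. v \<in> ends e})" using assms(1) by simp
  ultimately have "card {1..k} \<le> card (\<psi> ` {e\<in>M. v \<in> ends e})" by (rule card_mono[rotated])
  also have "\<dots> \<le> deg M ends v" unfolding deg_def using assms(1) by (intro card_image_le) auto
  finally show False using assms(2) by simp
qed

locale loopless_edges =
  fixes M :: "'e set" and ends :: "'e \<Rightarrow> 'v set"
  assumes card_ends: "e \<in> M \<Longrightarrow> card (ends e) = 2"
begin

lemma ends_obtain_other:
  assumes "e \<in> M" "v \<in> ends e"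
  obtains b where "ends e = {v, b}"
proof -
  obtain p q where "ends e = {p, q}" using card_ends[OF assms(1)] by (meson card_2_iff)
  with assms(2) that show thesis by auto
qed

lemma ends_doubleton_neq: "e \<in> M \<Longrightarrow> ends e = {a, b} \<Longrightarrow> a \<noteq> b"
  using card_ends by force

lemma not_in_nbrs_self: "y \<notin> nbrs M ends y"
  unfolding nbrs_def using ends_doubleton_neq by force

definition kempe_adj :: "('e \<Rightarrow> nat) \<Rightarrow> nat \<Rightarrow> nat \<Rightarrow> 'v \<Rightarrow> 'v \<Rightarrow> bool" where
  "kempe_adj \<psi> \<alpha> \<beta> a b \<longleftrightarrow> (\<exists>e\<in>M. ends e = {a, b} \<and> \<psi> e \<in> {\<alpha>, \<beta>})"

definition kempe_component :: "('e \<Rightarrow> nat) \<Rightarrow> nat \<Rightarrow> nat \<Rightarrow> 'v \<Rightarrow> 'v set" where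
  "kempe_component \<psi> \<alpha> \<beta> v = {b. (kempe_adj \<psi> \<alpha> \<beta>)\<^sup>*\<^sup>* v b}"

definition kempe_deg_le1 :: "('e \<Rightarrow> nat) \<Rightarrow> nat \<Rightarrow> nat \<Rightarrow> 'v \<Rightarrow> bool" where
  "kempe_deg_le1 \<psi> \<alpha> \<beta> v \<longleftrightarrow>
     (\<forall>e\<in>M. \<forall>f\<in>M. v \<in> ends e \<longrightarrow> v \<in> ends f \<longrightarrow> \<psi> e \<in> {\<alpha>, \<beta>} \<longrightarrow> \<psi> f \<in> {\<alpha>, \<beta>} \<longrightarrow> e = f)"

lemma kempe_deg_le1_if_missing:
  assumes "proper_coloring M ends k \<psi>" "c \<in> {\<alpha>, \<beta>}" "c \<in> missing M ends \<psi> k v"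
  shows "kempe_deg_le1 \<psi> \<alpha> \<beta> v"
  unfolding kempe_deg_le1_def
proof (intro ballI impI)
  fix e f assume ef: "e \<in> M" "f \<in> M" "v \<in> ends e" "v \<in> ends f" "\<psi> e \<in> {\<alpha>, \<beta>}" "\<psi> f \<in> {\<alpha>, \<beta>}"
  then have "\<psi> e \<noteq> c" "\<psi> f \<noteq> c" using assms(3) unfolding missing_def colors_at_def by auto
  with ef assms(2) have "\<psi> e = \<psi> f" by auto
  with assms(1) ef show "e = f" unfolding proper_coloring_def by blast
qed

lemma kempe_edges_at_vertex:
  assumes "proper_coloring M ends k \<psi>" "e\<^sub>1 \<in> M" "e\<^sub>2 \<in> M" "e\<^sub>3 \<in> M"
    and "v \<in> ends e\<^sub>1" "v \<in> ends e\<^sub>2" "v \<in> ends e\<^sub>3"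
    and "\<psi> e\<^sub>1 \<in> {\<alpha>, \<beta>}" "\<psi> e\<^sub>2 \<in> {\<alpha>, \<beta>}" "\<psi> e\<^sub>3 \<in> {\<alpha>, \<beta>}"
  shows "e\<^sub>1 = e\<^sub>2 \<or> e\<^sub>1 = e\<^sub>3 \<or> e\<^sub>2 = e\<^sub>3"
proof (rule ccontr)
  assume "\<not> ?thesis"
  with assms have "\<psi> e\<^sub>1 \<noteq> \<psi> e\<^sub>2" "\<psi> e\<^sub>1 \<noteq> \<psi> e\<^sub>3" "\<psi> e\<^sub>2 \<noteq> \<psi> e\<^sub>3"
    unfolding proper_coloring_def by blast+
  with assms(8-10) show False by auto
qed

lemma kempe_adj_sym: "symp (kempe_adj \<psi> \<alpha> \<beta>)"
  unfolding kempe_adj_def by (auto intro: sympI simp: insert_commute)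

lemma kempe_reach_sym: "(kempe_adj \<psi> \<alpha> \<beta>)\<^sup>*\<^sup>* a b \<Longrightarrow> (kempe_adj \<psi> \<alpha> \<beta>)\<^sup>*\<^sup>* b a"
  using sympD[OF symp_rtranclp[OF kempe_adj_sym]] .

text \<open>No vertex carries three \<open>\<alpha>\<beta>\<close>-edges, so injective \<open>\<alpha>\<beta>\<close>-walks from a vertex of
  \<open>\<alpha>\<beta>\<close>-degree at most one cannot branch.\<close>

lemma kempe_walks_agree:
  assumes proper: "proper_coloring M ends k \<psi>" and start: "kempe_deg_le1 \<psi> \<alpha> \<beta> (f 0)" "g 0 = f 0"
    and f: "\<forall>i<n. kempe_adj \<psi> \<alpha> \<beta> (f i) (f (Suc i))" "inj_on f {..n}"
    and g: "\<forall>i<m. kempe_adj \<psi> \<alpha> \<beta> (g i) (g (Suc i))" "inj_on g {..m}"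
  shows "i \<le> n \<Longrightarrow> i \<le> m \<Longrightarrow> f i = g i"
proof (induction i rule: nat_less_induct)
  case (1 i)
  consider "i = 0" | "i = 1" | h where "i = Suc (Suc h)"
    by (metis One_nat_def not0_implies_Suc)
  then show ?case
  proof cases
    case 1
    with start show ?thesis by simp
  next
    case 2
    with 1 f g start(2) have "kempe_adj \<psi> \<alpha> \<beta> (f 0) (f 1)" "kempe_adj \<psi> \<alpha> \<beta> (f 0) (g 1)"
      by auto
    then obtain e\<^sub>f e\<^sub>g where "e\<^sub>f \<in> M" "ends e\<^sub>f = {f 0, f 1}" "\<psi> e\<^sub>f \<in> {\<alpha>, \<beta>}"
      and "e\<^sub>g \<in> M" "ends e\<^sub>g = {f 0, g 1}" "\<psi> e\<^sub>g \<in> {\<alpha>, \<beta>}"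
      unfolding kempe_adj_def by blast
    moreover from this start(1) have "e\<^sub>f = e\<^sub>g" unfolding kempe_deg_le1_def by blast
    ultimately have "{f 0, f 1} = {f 0, g 1}" by simp
    with 2 show ?thesis by (auto simp: doubleton_eq_iff)
  next
    case (3 h)
    define v where "v = f (Suc h)"
    have prev: "f h = g h" and v: "v = g (Suc h)" using 1 3 unfolding v_def by auto
    have "kempe_adj \<psi> \<alpha> \<beta> (f h) v" "kempe_adj \<psi> \<alpha> \<beta> v (f i)"
      using f(1) 1(2) 3 unfolding v_def by auto
    moreover have "kempe_adj \<psi> \<alpha> \<beta> v (g i)"
      using g(1) 1(3) 3 unfolding v by auto
    ultimately
    obtain e\<^sub>0 e\<^sub>f e\<^sub>g where e\<^sub>0: "e\<^sub>0 \<in> M" "ends e\<^sub>0 = {f h, v}" "\<psi> e\<^sub>0 \<in> {\<alpha>, \<beta>}"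
      and e\<^sub>f: "e\<^sub>f \<in> M" "ends e\<^sub>f = {v, f i}" "\<psi> e\<^sub>f \<in> {\<alpha>, \<beta>}"
      and e\<^sub>g: "e\<^sub>g \<in> M" "ends e\<^sub>g = {v, g i}" "\<psi> e\<^sub>g \<in> {\<alpha>, \<beta>}"
      unfolding kempe_adj_def by blast
    have "f h \<noteq> v" "f i \<noteq> f h" using f(2) 1(2) 3 unfolding v_def inj_on_def by fastforce+
    moreover have "g i \<noteq> g h" using g(2) 1(3) 3 unfolding inj_on_def by fastforce
    ultimately have "e\<^sub>0 \<noteq> e\<^sub>f" "e\<^sub>0 \<noteq> e\<^sub>g"
      using e\<^sub>0(2) e\<^sub>f(2) e\<^sub>g(2) prev by (auto simp: doubleton_eq_iff)
    then have "e\<^sub>f = e\<^sub>g"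
      using kempe_edges_at_vertex[OF proper e\<^sub>0(1) e\<^sub>f(1) e\<^sub>g(1), of v] e\<^sub>0 e\<^sub>f e\<^sub>g by auto
    with e\<^sub>f(2) e\<^sub>g(2) show ?thesis by (auto simp: doubleton_eq_iff)
  qed
qed

text \<open>A Kempe chain through a vertex of \<open>\<alpha>\<beta>\<close>-degree at most one is a path starting
  there, so it has only one other end.\<close>

lemma kempe_component_other_end_unique:
  assumes proper: "proper_coloring M ends k \<psi>"
    and deg: "kempe_deg_le1 \<psi> \<alpha> \<beta> y" "kempe_deg_le1 \<psi> \<alpha> \<beta> x" "kempe_deg_le1 \<psi> \<alpha> \<beta> q"
    and reach: "(kempe_adj \<psi> \<alpha> \<beta>)\<^sup>*\<^sup>* y x" "(kempe_adj \<psi> \<alpha> \<beta>)\<^sup>*\<^sup>* y q"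
    and "x \<noteq> y" "q \<noteq> y"
  shows "x = q"
proof -
  have shorter_end: "x = q"
    if f: "f 0 = y" "f n = x" "\<forall>i<n. kempe_adj \<psi> \<alpha> \<beta> (f i) (f (Suc i))" "inj_on f {..n}"
      and g: "g 0 = y" "g m = q" "\<forall>i<m. kempe_adj \<psi> \<alpha> \<beta> (g i) (g (Suc i))" "inj_on g {..m}"
      and "n \<le> m" "x \<noteq> y" and deg_x: "kempe_deg_le1 \<psi> \<alpha> \<beta> x" for f g n m x q
  proof (rule ccontr)
    assume "x \<noteq> q"
    have "g n = x" using kempe_walks_agree[OF proper _ _ f(3,4) g(3,4)] f(1,2) g(1) \<open>n \<le> m\<close> deg(1) by auto
    have "n \<noteq> m" using \<open>g n = x\<close> \<open>x \<noteq> q\<close> g(2) by auto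
    moreover have "n \<noteq> 0" using f(1,2) \<open>x \<noteq> y\<close> by (cases n) auto
    ultimately obtain p where p: "n = Suc p" "n < m" using \<open>n \<le> m\<close> not0_implies_Suc by force
    then have "kempe_adj \<psi> \<alpha> \<beta> (g p) x" "kempe_adj \<psi> \<alpha> \<beta> x (g (Suc n))"
      using g(3) \<open>g n = x\<close> by auto
    then obtain e\<^sub>1 e\<^sub>2 where e\<^sub>1: "e\<^sub>1 \<in> M" "ends e\<^sub>1 = {g p, x}" "\<psi> e\<^sub>1 \<in> {\<alpha>, \<beta>}"
      and e\<^sub>2: "e\<^sub>2 \<in> M" "ends e\<^sub>2 = {x, g (Suc n)}" "\<psi> e\<^sub>2 \<in> {\<alpha>, \<beta>}"
      unfolding kempe_adj_def by blast
    have "g p \<noteq> g (Suc n)" using g(4) p unfolding inj_on_def by fastforce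
    with e\<^sub>1(2) e\<^sub>2(2) have "e\<^sub>1 \<noteq> e\<^sub>2" by (auto simp: doubleton_eq_iff)
    moreover have "e\<^sub>1 = e\<^sub>2"
      using deg_x e\<^sub>1 e\<^sub>2 unfolding kempe_deg_le1_def by blast
    ultimately show False by contradiction
  qed
  obtain n f where f: "f 0 = y" "f n = x" "\<forall>i<n. kempe_adj \<psi> \<alpha> \<beta> (f i) (f (Suc i))" "inj_on f {..n}"
    using reach(1) by (rule rtranclp_imp_inj_walk)
  obtain m g where g: "g 0 = y" "g m = q" "\<forall>i<m. kempe_adj \<psi> \<alpha> \<beta> (g i) (g (Suc i))" "inj_on g {..m}"
    using reach(2) by (rule rtranclp_imp_inj_walk)
  show ?thesis
  proof (cases "n \<le> m")
    case True
    with shorter_end[OF f g] \<open>x \<noteq> y\<close> deg(2) show ?thesis by blast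
  next
    case False
    with shorter_end[OF g f] \<open>q \<noteq> y\<close> deg(3) show ?thesis by force
  qed
qed

definition kempe_swap :: "('e \<Rightarrow> nat) \<Rightarrow> nat \<Rightarrow> nat \<Rightarrow> 'v \<Rightarrow> 'e \<Rightarrow> nat" where
  "kempe_swap \<psi> \<alpha> \<beta> v e =
     (if e \<in> M \<and> \<psi> e \<in> {\<alpha>, \<beta>} \<and> ends e \<subseteq> kempe_component \<psi> \<alpha> \<beta> v
      then (if \<psi> e = \<alpha> then \<beta> else \<alpha>) else \<psi> e)"

lemma kempe_component_closed:
  assumes "e \<in> M" "\<psi> e \<in> {\<alpha>, \<beta>}" "a \<in> ends e" "a \<in> kempe_component \<psi> \<alpha> \<beta> v"
  shows "ends e \<subseteq> kempe_component \<psi> \<alpha> \<beta> v"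
proof -
  obtain b where b: "ends e = {a, b}" using ends_obtain_other[OF assms(1,3)] .
  with assms(1,2) have "kempe_adj \<psi> \<alpha> \<beta> a b" unfolding kempe_adj_def by blast
  with assms(4) b show ?thesis unfolding kempe_component_def by auto
qed

lemma proper_coloring_kempe_swap:
  assumes proper: "proper_coloring M ends k \<psi>" and "\<alpha> \<in> {1..k}" "\<beta> \<in> {1..k}"
  shows "proper_coloring M ends k (kempe_swap \<psi> \<alpha> \<beta> v)"
  unfolding proper_coloring_def
proof (intro conjI ballI impI)
  fix e assume "e \<in> M"
  then show "kempe_swap \<psi> \<alpha> \<beta> v e \<in> {1..k}"
    using assms unfolding proper_coloring_def kempe_swap_def by auto
next
  fix e f assume e: "e \<in> M" and f: "f \<in> M" and ef: "e \<noteq> f \<and> ends e \<inter> ends f \<noteq> {}"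
  then obtain a where a: "a \<in> ends e" "a \<in> ends f" by blast
  have "\<psi> e \<noteq> \<psi> f" using proper e f ef unfolding proper_coloring_def by blast
  moreover have "ends e \<subseteq> kempe_component \<psi> \<alpha> \<beta> v \<longleftrightarrow> ends f \<subseteq> kempe_component \<psi> \<alpha> \<beta> v"
    if "\<psi> e \<in> {\<alpha>, \<beta>}" "\<psi> f \<in> {\<alpha>, \<beta>}"
    using kempe_component_closed[of e \<psi> \<alpha> \<beta> a v] kempe_component_closed[of f \<psi> \<alpha> \<beta> a v] e f that a
    by blast
  ultimately show "kempe_swap \<psi> \<alpha> \<beta> v e \<noteq> kempe_swap \<psi> \<alpha> \<beta> v f"
    using e f unfolding kempe_swap_def by auto
qed

lemma kempe_swap_outside:
  "a \<notin> kempe_component \<psi> \<alpha> \<beta> v \<Longrightarrow> a \<in> ends e \<Longrightarrow> kempe_swap \<psi> \<alpha> \<beta> v e = \<psi> e"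
  unfolding kempe_swap_def by auto

lemma missing_kempe_swap_outside:
  "a \<notin> kempe_component \<psi> \<alpha> \<beta> v \<Longrightarrow> missing M ends (kempe_swap \<psi> \<alpha> \<beta> v) k a = missing M ends \<psi> k a"
  unfolding missing_def colors_at_def using kempe_swap_outside[of a] by (auto simp: image_def)

lemma colors_between_kempe_swap_outside:
  "a \<notin> kempe_component \<psi> \<alpha> \<beta> v \<Longrightarrow>
    colors_between M ends (kempe_swap \<psi> \<alpha> \<beta> v) a b = colors_between M ends \<psi> a b"
  unfolding colors_between_def using kempe_swap_outside[of a] by (auto simp: image_def)

lemma missing_kempe_swap_inside:
  assumes "x \<in> kempe_component \<psi> \<alpha> \<beta> v" "\<alpha> \<in> missing M ends \<psi> k x" "\<beta> \<in> {1..k}"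
  shows "\<beta> \<in> missing M ends (kempe_swap \<psi> \<alpha> \<beta> v) k x"
proof -
  have "kempe_swap \<psi> \<alpha> \<beta> v e \<noteq> \<beta>" if "e \<in> M" "x \<in> ends e" for e
  proof -
    have "\<psi> e \<noteq> \<alpha>" using assms(2) that unfolding missing_def colors_at_def by auto
    then show ?thesis
      using kempe_component_closed[OF that(1) _ that(2) assms(1)] that(1) unfolding kempe_swap_def by auto
  qed
  with assms(3) show ?thesis unfolding missing_def colors_at_def by force
qed

end

locale maximal_coloring =
  fixes V :: "'v set" and E :: "'e set" and ends :: "'e \<Rightarrow> 'v set"
    and k :: nat and M :: "'e set" and y :: 'v
  assumes multigraph: "loopless_multigraph V E ends"
    and maximal: "maximal_k_colorable_sub E ends k M"
begin

lemma M_subset_E: "M \<subseteq> E"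
  using maximal unfolding maximal_k_colorable_sub_def by blast

lemma finite_M: "finite M"
  using M_subset_E multigraph finite_subset unfolding loopless_multigraph_def by blast

lemma card_ends_E: "e \<in> E \<Longrightarrow> card (ends e) = 2"
  using multigraph unfolding loopless_multigraph_def by blast

end

sublocale maximal_coloring \<subseteq> loopless_edges M ends
  using M_subset_E card_ends_E by unfold_locales blast

context maximal_coloring
begin

lemma uncolored_edge_missing_disjoint:
  assumes proper: "proper_coloring M ends k \<psi>" and e: "e \<in> E" "e \<notin> M" "ends e = {a, b}"
  shows "missing M ends \<psi> k a \<inter> missing M ends \<psi> k b = {}"
proof (rule ccontr)
  assume "missing M ends \<psi> k a \<inter> missing M ends \<psi> k b \<noteq> {}"
  then obtain c where "c \<in> missing M ends \<psi> k a" "c \<in> missing M ends \<psi> k b" by blast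
  then have "k_colorable (insert e M) ends k"
    using proper_coloring_insert_missing[OF proper e(3)] unfolding k_colorable_def by blast
  moreover have "M \<subset> insert e M" "insert e M \<subseteq> E" using e M_subset_E by auto
  ultimately show False using maximal unfolding maximal_k_colorable_sub_def by blast
qed

lemma Uk_uncolored_edge:
  assumes "u \<in> Uk E M ends k y"
  obtains e where "e \<in> E" "e \<notin> M" "ends e = {y, u}"
proof -
  have "\<not> {e\<in>E. ends e = {y, u}} \<subseteq> {e\<in>M. ends e = {y, u}}"
  proof
    assume "{e\<in>E. ends e = {y, u}} \<subseteq> {e\<in>M. ends e = {y, u}}"
    then have "mult E ends y u \<le> mult M ends y u"
      unfolding mult_def using finite_M by (intro card_mono) auto
    with assms show False unfolding Uk_def by auto
  qed
  with that show thesis by blast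
qed

lemma Uk_neq:
  assumes "u \<in> Uk E M ends k y"
  shows "u \<noteq> y"
proof -
  obtain e where "e \<in> E" "ends e = {y, u}" using Uk_uncolored_edge[OF assms] by blast
  with card_ends_E show ?thesis by force
qed

definition H_arc :: "('e \<Rightarrow> nat) \<Rightarrow> 'v \<Rightarrow> 'v \<Rightarrow> 'v \<Rightarrow> bool" where
  "H_arc \<psi> u a b \<longleftrightarrow>
     a \<in> H_verts M ends y u \<and> b \<in> H_verts M ends y u \<and> H_arcs M ends \<psi> k y a b > 0"

lemma H_reach_iff: "H_reach M ends \<psi> k y u v \<longleftrightarrow> (H_arc \<psi> u)\<^sup>*\<^sup>* u v"
  unfolding H_reach_def H_arc_def ..

lemma H_arc_iff:
  "H_arc \<psi> u a b \<longleftrightarrow> a \<in> H_verts M ends y u \<and> b \<in> H_verts M ends y u \<and>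
     (\<exists>c \<in> missing M ends \<psi> k a. c \<in> colors_between M ends \<psi> y b)"
proof -
  have "finite (missing M ends \<psi> k a)" unfolding missing_def by auto
  then show ?thesis unfolding H_arc_def H_arcs_def by (auto simp: card_gt_0_iff)
qed

lemma H_arc_neq_y: "u \<noteq> y \<Longrightarrow> H_arc \<psi> u a b \<Longrightarrow> a \<noteq> y \<and> b \<noteq> y"
  unfolding H_arc_def H_verts_def using not_in_nbrs_self by auto

lemma H_reach_neq_y:
  assumes "u \<in> Uk E M ends k y" "(H_arc \<psi> u)\<^sup>*\<^sup>* u v"
  shows "v \<noteq> y"
  using assms(2)
proof (induction rule: rtranclp_induct)
  case base
  show ?case using Uk_neq[OF assms(1)] .
next
  case (step a b)
  then show ?case using H_arc_neq_y[OF Uk_neq[OF assms(1)]] by blast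
qed

lemma H_arc_recolor:
  assumes "H_arc \<psi> u a b" "a \<notin> ends e" "ends e \<noteq> {y, b}"
  shows "H_arc (\<psi>(e := c)) u a b"
  using assms missing_fun_upd_other[where ends=ends and e=e and p=a]
    colors_between_fun_upd_other[where ends=ends and e=e and a=y and b=b]
  unfolding H_arc_iff by auto

lemma missing_disjoint_along_inj_walk:
  assumes e\<^sub>0: "e\<^sub>0 \<in> E" "e\<^sub>0 \<notin> M" "ends e\<^sub>0 = {y, u}" and "u \<noteq> y"
  shows "proper_coloring M ends k \<psi> \<Longrightarrow> f 0 = u \<Longrightarrow> \<forall>i<n. H_arc \<psi> u (f i) (f (Suc i)) \<Longrightarrow>
    inj_on f {..n} \<Longrightarrow> missing M ends \<psi> k y \<inter> missing M ends \<psi> k (f n) = {}"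
proof (induction n arbitrary: \<psi>)
  case 0
  then show ?case using uncolored_edge_missing_disjoint[OF _ e\<^sub>0] by simp
next
  case (Suc n)
  define v where "v = f (Suc n)"
  show ?case
  proof (rule ccontr)
    assume "missing M ends \<psi> k y \<inter> missing M ends \<psi> k (f (Suc n)) \<noteq> {}"
    then obtain c where c: "c \<in> missing M ends \<psi> k y" "c \<in> missing M ends \<psi> k v"
      unfolding v_def by blast
    have arc: "H_arc \<psi> u (f n) v" using Suc.prems(3) unfolding v_def by simp
    then obtain e where e: "e \<in> M" "ends e = {y, v}" and d: "\<psi> e \<in> missing M ends \<psi> k (f n)"
      unfolding H_arc_iff colors_between_def by blast
    have off_y: "f i \<noteq> y" "f (Suc i) \<noteq> y" if "i < Suc n" for i
      using H_arc_neq_y[OF \<open>u \<noteq> y\<close>] Suc.prems(3) that by blast+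
    have off_v: "f i \<noteq> v" if "i \<le> n" for i
      using Suc.prems(4) that unfolding v_def inj_on_def by fastforce
    have off_e: "f i \<notin> ends e" if "i \<le> n" for i
      using off_y off_v that e(2) by auto
    have off_e_pair: "ends e \<noteq> {y, f (Suc i)}" if "i < n" for i
      using off_y[of i] off_v[of "Suc i"] that e(2) by (auto simp: doubleton_eq_iff)
    define \<phi> where "\<phi> = \<psi>(e := c)"
    have "proper_coloring M ends k \<phi>" and "\<psi> e \<in> missing M ends \<phi> k y"
      using recolor_edge[OF Suc.prems(1) e c] unfolding \<phi>_def by blast+
    moreover have "\<psi> e \<in> missing M ends \<phi> k (f n)"
      using d missing_fun_upd_other[where ends=ends and e=e and p="f n"] off_e[of n]
      unfolding \<phi>_def by simp
    moreover have "\<forall>i<n. H_arc \<phi> u (f i) (f (Suc i))"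
      using Suc.prems(3) H_arc_recolor off_e off_e_pair unfolding \<phi>_def by auto
    moreover have "inj_on f {..n}" using Suc.prems(4) by (rule inj_on_subset) auto
    ultimately show False using Suc.IH[of \<phi>] Suc.prems(2) by blast
  qed
qed

lemma missing_disjoint_if_H_reach:
  assumes "proper_coloring M ends k \<psi>" "u \<in> Uk E M ends k y" "(H_arc \<psi> u)\<^sup>*\<^sup>* u v"
  shows "missing M ends \<psi> k y \<inter> missing M ends \<psi> k v = {}"
proof -
  obtain e\<^sub>0 where "e\<^sub>0 \<in> E" "e\<^sub>0 \<notin> M" "ends e\<^sub>0 = {y, u}" using Uk_uncolored_edge[OF assms(2)] .
  moreover obtain n f where "f 0 = u" "f n = v" "\<forall>i<n. H_arc \<psi> u (f i) (f (Suc i))" "inj_on f {..n}"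
    using assms(3) by (rule rtranclp_imp_inj_walk)
  ultimately show ?thesis
    using missing_disjoint_along_inj_walk[OF _ _ _ Uk_neq[OF assms(2)] assms(1)] by metis
qed

lemma H_arc_kempe_swap:
  assumes arc: "H_arc \<psi> u a b" and y: "y \<notin> kempe_component \<psi> \<alpha> \<beta> v" "\<beta> \<in> missing M ends \<psi> k y"
    and a: "\<alpha> \<notin> missing M ends \<psi> k a \<or> a \<notin> kempe_component \<psi> \<alpha> \<beta> v"
  shows "H_arc (kempe_swap \<psi> \<alpha> \<beta> v) u a b"
proof -
  obtain c where c: "c \<in> missing M ends \<psi> k a" "c \<in> colors_between M ends \<psi> y b"
    using arc unfolding H_arc_iff by blast
  have "c \<in> missing M ends (kempe_swap \<psi> \<alpha> \<beta> v) k a"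
  proof (cases "a \<in> kempe_component \<psi> \<alpha> \<beta> v")
    case False
    then show ?thesis using c(1) missing_kempe_swap_outside by auto
  next
    case True
    then have "c \<noteq> \<alpha>" using a c(1) by auto
    moreover have "c \<noteq> \<beta>"
      using c y(2) unfolding missing_def colors_at_def colors_between_def by auto
    ultimately show ?thesis
      using c(1) unfolding missing_def colors_at_def kempe_swap_def by (auto simp: image_def)
  qed
  then show ?thesis
    using arc c(2) colors_between_kempe_swap_outside[OF y(1)] unfolding H_arc_iff by auto
qed

text \<open>Swapping \<open>\<alpha>\<close> and \<open>\<beta>\<close> on the Kempe chain of \<open>v\<close> keeps the walk from \<open>u\<close> to \<open>v\<close>
  and makes \<open>\<beta>\<close> missing at both \<open>y\<close> and \<open>v\<close>.\<close>

lemma kempe_swap_H_walk_absurd: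
  assumes proper: "proper_coloring M ends k \<psi>" and u: "u \<in> Uk E M ends k y"
    and \<beta>: "\<beta> \<in> missing M ends \<psi> k y" and \<alpha>: "\<alpha> \<in> missing M ends \<psi> k v"
    and y: "y \<notin> kempe_component \<psi> \<alpha> \<beta> v"
    and walk: "(\<lambda>a b. H_arc \<psi> u a b \<and> (\<alpha> \<notin> missing M ends \<psi> k a \<or> a \<notin> kempe_component \<psi> \<alpha> \<beta> v))\<^sup>*\<^sup>* u v"
  shows False
proof -
  define \<phi> where "\<phi> = kempe_swap \<psi> \<alpha> \<beta> v"
  have "\<alpha> \<in> {1..k}" "\<beta> \<in> {1..k}" using \<alpha> \<beta> unfolding missing_def by auto
  then have "proper_coloring M ends k \<phi>"
    unfolding \<phi>_def by (rule proper_coloring_kempe_swap[OF proper])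
  moreover have "(H_arc \<phi> u)\<^sup>*\<^sup>* u v"
    using mono_rtranclp[rule_format, OF _ walk] H_arc_kempe_swap[OF _ y \<beta>] unfolding \<phi>_def by blast
  moreover have "\<beta> \<in> missing M ends \<phi> k y"
    using \<beta> missing_kempe_swap_outside[OF y] unfolding \<phi>_def by simp
  moreover have "\<beta> \<in> missing M ends \<phi> k v"
    using missing_kempe_swap_inside[OF _ \<alpha> \<open>\<beta> \<in> {1..k}\<close>] unfolding \<phi>_def kempe_component_def by simp
  ultimately show False using missing_disjoint_if_H_reach[OF _ u] by blast
qed

lemma two_alpha_ends_absurd:
  assumes proper: "proper_coloring M ends k \<psi>"
    and u: "u\<^sub>1 \<in> Uk E M ends k y" "u\<^sub>2 \<in> Uk E M ends k y"
    and \<beta>: "\<beta> \<in> missing M ends \<psi> k y"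
    and \<alpha>: "\<alpha> \<in> missing M ends \<psi> k x" "\<alpha> \<in> missing M ends \<psi> k q" and "x \<noteq> q"
    and walk_x: "(\<lambda>a b. H_arc \<psi> u\<^sub>1 a b \<and> \<alpha> \<notin> missing M ends \<psi> k a)\<^sup>*\<^sup>* u\<^sub>1 x"
    and walk_q: "(\<lambda>a b. H_arc \<psi> u\<^sub>2 a b \<and> (\<alpha> \<notin> missing M ends \<psi> k a \<or> a = x))\<^sup>*\<^sup>* u\<^sub>2 q"
  shows False
proof (cases "y \<in> kempe_component \<psi> \<alpha> \<beta> x")
  case False
  have "(\<lambda>a b. H_arc \<psi> u\<^sub>1 a b \<and> (\<alpha> \<notin> missing M ends \<psi> k a \<or> a \<notin> kempe_component \<psi> \<alpha> \<beta> x))\<^sup>*\<^sup>* u\<^sub>1 x"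
    by (rule mono_rtranclp[rule_format, OF _ walk_x]) auto
  then show False by (rule kempe_swap_H_walk_absurd[OF proper u(1) \<beta> \<alpha>(1) False])
next
  case True
  let ?K = "kempe_adj \<psi> \<alpha> \<beta>"
  have "(H_arc \<psi> u\<^sub>1)\<^sup>*\<^sup>* u\<^sub>1 x" by (rule mono_rtranclp[rule_format, OF _ walk_x]) auto
  then have "x \<noteq> y" by (rule H_reach_neq_y[OF u(1)])
  have "(H_arc \<psi> u\<^sub>2)\<^sup>*\<^sup>* u\<^sub>2 q" by (rule mono_rtranclp[rule_format, OF _ walk_q]) auto
  then have "q \<noteq> y" by (rule H_reach_neq_y[OF u(2)])
  have "?K\<^sup>*\<^sup>* y x" using True kempe_reach_sym unfolding kempe_component_def by blast
  moreover have "kempe_deg_le1 \<psi> \<alpha> \<beta> y" "kempe_deg_le1 \<psi> \<alpha> \<beta> x" "kempe_deg_le1 \<psi> \<alpha> \<beta> q"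
    using kempe_deg_le1_if_missing[OF proper] \<alpha> \<beta> by blast+
  ultimately have "\<not> ?K\<^sup>*\<^sup>* y q"
    using kempe_component_other_end_unique[OF proper] \<open>x \<noteq> y\<close> \<open>q \<noteq> y\<close> \<open>x \<noteq> q\<close> by blast
  then have y: "y \<notin> kempe_component \<psi> \<alpha> \<beta> q" and x: "x \<notin> kempe_component \<psi> \<alpha> \<beta> q"
    using True kempe_reach_sym rtranclp_trans[of ?K q x y] unfolding kempe_component_def by blast+
  have "(\<lambda>a b. H_arc \<psi> u\<^sub>2 a b \<and> (\<alpha> \<notin> missing M ends \<psi> k a \<or> a \<notin> kempe_component \<psi> \<alpha> \<beta> q))\<^sup>*\<^sup>* u\<^sub>2 q"
    by (rule mono_rtranclp[rule_format, OF _ walk_q]) (use x in auto)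
  then show False by (rule kempe_swap_H_walk_absurd[OF proper u(2) \<beta> \<alpha>(2) y])
qed

lemma nonremote_H_reach:
  assumes "w \<in> nbrs M ends y" "\<not> remote E M ends \<psi> k y w"
  obtains u where "u \<in> Uk E M ends k y" "(H_arc \<psi> u)\<^sup>*\<^sup>* u w"
  using assms unfolding remote_def H_reach_iff by blast

lemma missing_disjoint_nonremote:
  assumes proper: "proper_coloring M ends k \<psi>" and "deg M ends y < k"
    and w: "w \<in> nbrs M ends y" "\<not> remote E M ends \<psi> k y w"
    and z: "z \<in> nbrs M ends y" "\<not> remote E M ends \<psi> k y z" and "w \<noteq> z"
  shows "missing M ends \<psi> k w \<inter> missing M ends \<psi> k z = {}"
proof (rule ccontr)
  assume "missing M ends \<psi> k w \<inter> missing M ends \<psi> k z \<noteq> {}"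
  then obtain \<alpha> where \<alpha>: "\<alpha> \<in> missing M ends \<psi> k w" "\<alpha> \<in> missing M ends \<psi> k z" by blast
  obtain \<beta> where \<beta>: "\<beta> \<in> missing M ends \<psi> k y"
    using missing_nonempty_if_deg_less[OF finite_M \<open>deg M ends y < k\<close>] by blast
  let ?A = "\<lambda>a. \<alpha> \<in> missing M ends \<psi> k a"
  have walk_past_first:
    "False" if u: "u \<in> Uk E M ends k y" and walk_x: "(\<lambda>a b. H_arc \<psi> u a b \<and> \<not> ?A a)\<^sup>*\<^sup>* u x"
      and x: "?A x" and walk_v: "(H_arc \<psi> u)\<^sup>*\<^sup>* x v" and v: "?A v" "v \<noteq> x" for u x v
  proof -
    obtain q where walk_q: "(\<lambda>a b. H_arc \<psi> u a b \<and> \<not> (?A a \<and> a \<noteq> x))\<^sup>*\<^sup>* x q" "?A q" "q \<noteq> x"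
      using rtranclp_first_hit[of "H_arc \<psi> u" x v "\<lambda>a. ?A a \<and> a \<noteq> x"] walk_v v by blast
    have "(\<lambda>a b. H_arc \<psi> u a b \<and> \<not> (?A a \<and> a \<noteq> x))\<^sup>*\<^sup>* u x"
      by (rule mono_rtranclp[rule_format, OF _ walk_x]) auto
    then have "(\<lambda>a b. H_arc \<psi> u a b \<and> \<not> (?A a \<and> a \<noteq> x))\<^sup>*\<^sup>* u q"
      using walk_q(1) by (rule rtranclp_trans)
    then have "(\<lambda>a b. H_arc \<psi> u a b \<and> (\<not> ?A a \<or> a = x))\<^sup>*\<^sup>* u q"
      by (rule mono_rtranclp[rule_format, rotated]) auto
    with two_alpha_ends_absurd[OF proper u u \<beta> x walk_q(2)] walk_q(3) walk_x show False
      by blast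
  qed
  obtain u\<^sub>1 where u\<^sub>1: "u\<^sub>1 \<in> Uk E M ends k y" "(H_arc \<psi> u\<^sub>1)\<^sup>*\<^sup>* u\<^sub>1 w" using nonremote_H_reach[OF w] .
  obtain u\<^sub>2 where u\<^sub>2: "u\<^sub>2 \<in> Uk E M ends k y" "(H_arc \<psi> u\<^sub>2)\<^sup>*\<^sup>* u\<^sub>2 z" using nonremote_H_reach[OF z] .
  obtain x\<^sub>1 where x\<^sub>1: "(\<lambda>a b. H_arc \<psi> u\<^sub>1 a b \<and> \<not> ?A a)\<^sup>*\<^sup>* u\<^sub>1 x\<^sub>1" "?A x\<^sub>1" "(H_arc \<psi> u\<^sub>1)\<^sup>*\<^sup>* x\<^sub>1 w"
    using u\<^sub>1(2) \<alpha>(1) by (rule rtranclp_first_hit)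
  obtain x\<^sub>2 where x\<^sub>2: "(\<lambda>a b. H_arc \<psi> u\<^sub>2 a b \<and> \<not> ?A a)\<^sup>*\<^sup>* u\<^sub>2 x\<^sub>2" "?A x\<^sub>2" "(H_arc \<psi> u\<^sub>2)\<^sup>*\<^sup>* x\<^sub>2 z"
    using u\<^sub>2(2) \<alpha>(2) by (rule rtranclp_first_hit)
  show False
  proof (cases "x\<^sub>1 = x\<^sub>2")
    case False
    have "(\<lambda>a b. H_arc \<psi> u\<^sub>2 a b \<and> (\<not> ?A a \<or> a = x\<^sub>1))\<^sup>*\<^sup>* u\<^sub>2 x\<^sub>2"
      by (rule mono_rtranclp[rule_format, OF _ x\<^sub>2(1)]) auto
    with two_alpha_ends_absurd[OF proper u\<^sub>1(1) u\<^sub>2(1) \<beta> x\<^sub>1(2) x\<^sub>2(2) False x\<^sub>1(1)] show False .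
  next
    case True
    with \<open>w \<noteq> z\<close> consider "w \<noteq> x\<^sub>1" | "z \<noteq> x\<^sub>2" by blast
    then show False
      using walk_past_first[OF u\<^sub>1(1) x\<^sub>1(1,2,3) \<alpha>(1)] walk_past_first[OF u\<^sub>2(1) x\<^sub>2(1,2,3) \<alpha>(2)]
      by cases auto
  qed
qed

lemma missing_disjoint_self_nonremote:
  assumes "proper_coloring M ends k \<psi>" "z \<in> nbrs M ends y" "\<not> remote E M ends \<psi> k y z"
  shows "missing M ends \<psi> k y \<inter> missing M ends \<psi> k z = {}"
  using nonremote_H_reach[OF assms(2,3)] missing_disjoint_if_H_reach[OF assms(1)] by metis

lemma colors_between_missing_disjoint_nonremote:
  assumes "remote E M ends \<psi> k y w" "z \<in> nbrs M ends y" "\<not> remote E M ends \<psi> k y z"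
  shows "colors_between M ends \<psi> y w \<inter> missing M ends \<psi> k z = {}"
proof (rule ccontr)
  assume "colors_between M ends \<psi> y w \<inter> missing M ends \<psi> k z \<noteq> {}"
  then have "H_arc \<psi> u z w" for u
    using assms(1,2) unfolding H_arc_iff remote_def H_verts_def by blast
  moreover obtain u where "u \<in> Uk E M ends k y" "(H_arc \<psi> u)\<^sup>*\<^sup>* u z"
    using nonremote_H_reach[OF assms(2,3)] .
  ultimately show False
    using assms(1) unfolding remote_def H_reach_iff by (meson rtranclp.rtrancl_into_rtrancl)
qed

lemma colors_between_missing_disjoint_self:
  "colors_between M ends \<psi> y w \<inter> missing M ends \<psi> k y = {}"
  unfolding colors_between_def missing_def colors_at_def by auto

lemma colors_between_disjoint:
  assumes "proper_coloring M ends k \<psi>" "w \<noteq> z"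
  shows "colors_between M ends \<psi> y w \<inter> colors_between M ends \<psi> y z = {}"
  using assms unfolding proper_coloring_def colors_between_def
  by (fastforce simp: doubleton_eq_iff)

lemma Cset_self: "Cset E M ends \<psi> k y y = missing M ends \<psi> k y"
  using not_in_nbrs_self unfolding Cset_def remote_def by simp

lemma Cset_disjoint_self:
  assumes "proper_coloring M ends k \<psi>" "z \<in> nbrs M ends y"
  shows "Cset E M ends \<psi> k y y \<inter> Cset E M ends \<psi> k y z = {}"
  using colors_between_missing_disjoint_self missing_disjoint_self_nonremote[OF assms]
  unfolding Cset_self by (auto simp: Cset_def)

lemma Cset_disjoint_nbrs:
  assumes proper: "proper_coloring M ends k \<psi>" and "deg M ends y < k"
    and nbrs: "w \<in> nbrs M ends y" "z \<in> nbrs M ends y" and "w \<noteq> z"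
  shows "Cset E M ends \<psi> k y w \<inter> Cset E M ends \<psi> k y z = {}"
  using colors_between_disjoint[OF proper \<open>w \<noteq> z\<close>]
    colors_between_missing_disjoint_nonremote[where \<psi>=\<psi> and w=w, OF _ nbrs(2)]
    colors_between_missing_disjoint_nonremote[where \<psi>=\<psi> and w=z, OF _ nbrs(1)]
    missing_disjoint_nonremote[OF proper \<open>deg M ends y < k\<close> nbrs(1) _ nbrs(2) _ \<open>w \<noteq> z\<close>]
  unfolding Cset_def by auto

end

theorem mainTheorem4:
  fixes V :: "'v set" and E :: "'e set" and ends :: "'e \<Rightarrow> 'v set"
    and k :: nat and M :: "'e set" and \<psi> :: "'e \<Rightarrow> nat" and y w z :: 'v
  assumes "loopless_multigraph V E ends"
    and "k \<ge> 1"
    and "maximal_k_colorable_sub E ends k M"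
    and "proper_coloring M ends k \<psi>"
    and "y \<in> V"
    and "deg M ends y < k"
    and "w \<in> nbrs M ends y \<union> {y}"
    and "z \<in> nbrs M ends y \<union> {y}"
    and "w \<noteq> z"
  shows "Cset E M ends \<psi> k y w \<inter> Cset E M ends \<psi> k y z = {}"
proof -
  interpret maximal_coloring V E ends k M y
    using assms(1,3) by unfold_locales
  consider "w = y" "z \<in> nbrs M ends y" | "z = y" "w \<in> nbrs M ends y"
    | "w \<in> nbrs M ends y" "z \<in> nbrs M ends y"
    using assms(7-9) by blast
  then show ?thesis
  proof cases
    case 1
    then show ?thesis using Cset_disjoint_self[OF assms(4)] by simp
  next
    case 2
    then show ?thesis using Cset_disjoint_self[OF assms(4)] by (simp add: Int_commute)
  next
    case 3
    then show ?thesis using Cset_disjoint_nbrs[OF assms(4,6) _ _ assms(9)] by simp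
  qed
qed

end
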